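(* Consider the algorithm MoBIL-VI described in the context with weights $w_n=n^p$ and $p=0$. Then $$\mathcal R(0)\le\frac{G_h^2}{2\mu_f\mu_h}\frac1N+\frac{\epsilon^w_{\hat{\mathcal F}}}{2\mu_f}\frac{\ln N+1}{N}.$$
   Context: Setting: $\Pi$ is a compact convex subset of a normed space (norm $\|\cdot\|$, dual norm $\|\cdot\|_*$) of policies; $d_\pi$ is a distribution over state–time pairs induced by $\pi$; $\pi^*$ is an expert policy and $D(\pi^*_s\|\pi_s)\ge0$ a discrepancy; $F(\pi',\pi)=\mathbb E_{(s,t)\sim d_{\pi'}}[D(\pi^*_s\|\pi_s)]$ and $\nabla_2F$ is its gradient in the second argument. $\hat{\mathcal F}$ is a convex set (in a normed space) of "predictive models" $\hat F$, each a bivariate function on $\Pi\times\Pi$ with gradient $\nabla_2\hat F$ in the second argument; assume there is $L\ge0$ with $\|\nabla_2\hat F(\pi,\pi)-\nabla_2\hat F(\pi',\pi')\|_*\le L\|\pi-\pi'\|$ for all $\hat F\in\hat{\mathcal F}$, $\pi,\pi'\in\Pi$. Online learning: in round $n$ the learner plays $\pi_n$, the policy cost is $f_n(\pi)=F(\pi_n,\pi)$, and the model cost $h_n:\hat{\mathcal F}\to\mathbb R$ satisfies $h_n(\hat F)\ge\|\nabla_2F(\pi_n,\pi_n)-\nabla_2\hat F(\pi_n,\pi_n)\|_*^2$. Assume each $f_n$ is $\mu_f$-strongly convex with $\|\nabla f_n(\pi)\|_*\le G_f$ on $\Pi$, and each $h_n$ is $\mu_h$-strongly convex with $\|\nabla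 h_n(\hat F)\|_*\le G_h$ on $\hat{\mathcal F}$ ($\mu_f,\mu_h>0$). MoBIL-VI (deterministic: $\tilde f_n=f_n$, $\tilde h_n=h_n$): with weights $w_n=n^p$, in round $n$ update the model by $\hat F_{n+1}\in\operatorname{arg\,min}_{\hat F\in\hat{\mathcal F}}\sum_{m=1}^n\frac{w_m}{m}h_m(\hat F)$, and then set $\pi_{n+1}\in\Pi$ to be an (exact) solution of the variational inequality $\langle\Phi_n(\pi_{n+1}),\pi'-\pi_{n+1}\rangle\ge0$ for all $\pi'\in\Pi$, where $\Phi_n(\pi)=\sum_{m=1}^n w_m\nabla f_m(\pi)+w_{n+1}\nabla_2\hat F_{n+1}(\pi,\pi)$. Define $\mathrm{regret}^w(\Pi)=\max_{\pi\in\Pi}\sum_{n=1}^N w_n(f_n(\pi_n)-f_n(\pi))$ and $\mathcal R(p)=\mathrm{regret}^w(\Pi)/w_{1:N}$, $w_{1:N}=\sum_{n=1}^N w_n$. The constant $\epsilon^w_{\hat{\mathcal F}}$ satisfies: for all $N$ and weights $\theta_n>0$ with $\sum_{n=1}^N\theta_n=1$, $\max_{\{\pi_n\in\Pi\}}\min_{\hat F\in\hat{\mathcal F}}\sum_{n=1}^N\theta_n h_n(\hat F)\le\epsilon^w_{\hat{\mathcal F}}$.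
   Formalization: The initial policy $\pi_1$ solves the variational inequality $\langle\Phi_0(\pi_1),\pi'-\pi_1\rangle\ge0$ for all $\pi'\in\Pi$, where $\Phi_0(\pi)=w_1\nabla_2\hat F_1(\pi,\pi)$ for some $\hat F_1\in\hat{\mathcal F}$. The statement above fails without it. *)

theory Defs
  imports "HOL-Analysis.Analysis"
begin

definition strongly_convex_on :: "'a::real_normed_vector set \<Rightarrow> real \<Rightarrow> ('a \<Rightarrow> real) \<Rightarrow> bool" where
  "strongly_convex_on S \<mu> f \<longleftrightarrow> convex S \<and>
     (\<forall>x\<in>S. \<forall>y\<in>S. \<forall>t\<in>{0..1}.
        f (t *\<^sub>R x + (1 - t) *\<^sub>R y) \<le> t * f x + (1 - t) * f y - \<mu> / 2 * t * (1 - t) * (norm (x - y))\<^sup>2)"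

definition mobil_w :: "real \<Rightarrow> nat \<Rightarrow> real" where
  "mobil_w p n = real n powr p"

definition Phi :: "real \<Rightarrow> ('a \<Rightarrow> 'a \<Rightarrow> ('a::real_normed_vector \<Rightarrow>\<^sub>L real))
     \<Rightarrow> ('b \<Rightarrow> 'a \<Rightarrow> 'a \<Rightarrow> ('a \<Rightarrow>\<^sub>L real)) \<Rightarrow> (nat \<Rightarrow> 'a) \<Rightarrow> (nat \<Rightarrow> 'b) \<Rightarrow> nat \<Rightarrow> 'a \<Rightarrow> ('a \<Rightarrow>\<^sub>L real)" where
  "Phi p gradF gradM pis Fhs n x =
     (\<Sum>m = 1..n. mobil_w p m *\<^sub>R gradF (pis m) x) + mobil_w p (n + 1) *\<^sub>R gradM (Fhs (n + 1)) x x"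

text \<open>The (deterministic, exact) MoBIL-VI iterates pi_1..pi_N with models Fh_1..Fh_N.
  Round 0 is the initialisation: Fh_1 is an arbitrary model, and pi_1 solves the VI with Phi_0.\<close>
definition MoBIL_VI ::
  "real \<Rightarrow> 'a::real_normed_vector set \<Rightarrow> 'b::real_normed_vector set
   \<Rightarrow> ('a \<Rightarrow> 'a \<Rightarrow> ('a \<Rightarrow>\<^sub>L real)) \<Rightarrow> ('b \<Rightarrow> 'a \<Rightarrow> 'a \<Rightarrow> ('a \<Rightarrow>\<^sub>L real))
   \<Rightarrow> ('a \<Rightarrow> 'b \<Rightarrow> real) \<Rightarrow> nat \<Rightarrow> (nat \<Rightarrow> 'a) \<Rightarrow> (nat \<Rightarrow> 'b) \<Rightarrow> bool" where
  "MoBIL_VI p Pol Models gradF gradM hc N pis Fhs \<longleftrightarrow>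
     Fhs 1 \<in> Models \<and>
     (\<forall>n\<in>{1..<N}. Fhs (n + 1) \<in> Models \<and>
        (\<forall>G\<in>Models. (\<Sum>m = 1..n. mobil_w p m / real m * hc (pis m) (Fhs (n + 1)))
                    \<le> (\<Sum>m = 1..n. mobil_w p m / real m * hc (pis m) G))) \<and>
     (\<forall>n\<in>{0..<N}. pis (n + 1) \<in> Pol \<and>
        (\<forall>q'\<in>Pol. blinfun_apply (Phi p gradF gradM pis Fhs n (pis (n + 1))) (q' - pis (n + 1)) \<ge> 0))"

text \<open>regret^w(Pol) = max over Pol of sum_n w_n (f_n(pi_n) - f_n(x)), with f_n = F(pi_n, .).\<close>
definition regret_w :: "real \<Rightarrow> 'a set \<Rightarrow> ('a \<Rightarrow> 'a \<Rightarrow> real) \<Rightarrow> nat \<Rightarrow> (nat \<Rightarrow> 'a) \<Rightarrow> real" where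
  "regret_w p Pol F N pis = (SUP x\<in>Pol. \<Sum>n = 1..N. mobil_w p n * (F (pis n) (pis n) - F (pis n) x))"

definition avg_regret :: "real \<Rightarrow> 'a set \<Rightarrow> ('a \<Rightarrow> 'a \<Rightarrow> real) \<Rightarrow> nat \<Rightarrow> (nat \<Rightarrow> 'a) \<Rightarrow> real" where
  "avg_regret p Pol F N pis = regret_w p Pol F N pis / (\<Sum>n = 1..N. mobil_w p n)"

end

theory Submission
  imports Defs
begin

(* With unit weights, pi_n solves the variational inequality of f_1 + ... + f_(n-1) plus the
   model's prediction of the gradient of f_n.  Compared with the first-order condition of the
   (n mu_f)-strongly convex sum f_1 + ... + f_n, this shows that pi_n minimises that sum up to
   e_n^2 / (2 mu_f n), where e_n is the prediction error at pi_n, and e_n^2 <= h_n(Fh_n).  Summing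
   such leader gaps telescopes ("be the leader") into a bound on the regret, so the regret is at
   most sum_n h_n(Fh_n) / (2 mu_f n).  The models play follow-the-leader on the strongly convex
   losses h_n / n, whose leader gaps are at most G_h^2 / (2 mu_h n^2); telescoping again, against
   a model that is eps-good for the weights (1/n) / H_N, gives
   sum_n h_n(Fh_n) / n <= G_h^2 / mu_h + H_N eps, and H_N <= ln N + 1. *)

lemma strongly_convex_on_segment:
  assumes sc: "strongly_convex_on S \<mu> g" and x: "x \<in> S" and y: "y \<in> S"
    and t: "0 \<le> t" "t \<le> 1"
  shows "x + t *\<^sub>R (y - x) \<in> S"
    and "g (x + t *\<^sub>R (y - x)) - g x \<le> t * (g y - g x - \<mu> / 2 * (1 - t) * (norm (y - x))\<^sup>2)"
proof -
  have eq: "x + t *\<^sub>R (y - x) = t *\<^sub>R y + (1 - t) *\<^sub>R x"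
    by (simp add: algebra_simps)
  show "x + t *\<^sub>R (y - x) \<in> S"
    unfolding eq using sc x y t by (auto simp: strongly_convex_on_def intro: convexD)
  have "g (t *\<^sub>R y + (1 - t) *\<^sub>R x) \<le> t * g y + (1 - t) * g x - \<mu> / 2 * t * (1 - t) * (norm (y - x))\<^sup>2"
    using sc x y t unfolding strongly_convex_on_def by auto
  then show "g (x + t *\<^sub>R (y - x)) - g x \<le> t * (g y - g x - \<mu> / 2 * (1 - t) * (norm (y - x))\<^sup>2)"
    unfolding eq by (simp add: algebra_simps)
qed

lemma has_derivative_within_segment_quotient:
  fixes g :: "'a::real_normed_vector \<Rightarrow> real"
  assumes S: "convex S" and x: "x \<in> S" and y: "y \<in> S"
    and D: "(g has_derivative D) (at x within S)"
  shows "((\<lambda>t. (g (x + t *\<^sub>R (y - x)) - g x) / t) \<longlongrightarrow> D (y - x)) (at_right 0)"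
proof -
  define p where "p t = x + t *\<^sub>R (y - x)" for t :: real
  have "p ` {0..1} \<subseteq> S"
    using convexD_alt[OF S x y] by (auto simp: p_def algebra_simps)
  then have "(g has_derivative D) (at (p 0) within p ` {0..1})"
    using has_derivative_subset[OF D] by (simp add: p_def)
  moreover have "(p has_derivative (\<lambda>t. t *\<^sub>R (y - x))) (at 0 within {0..1})"
    unfolding p_def by (auto intro!: derivative_eq_intros)
  ultimately have "((g \<circ> p) has_derivative (D \<circ> (\<lambda>t. t *\<^sub>R (y - x)))) (at 0 within {0..1})"
    by (rule diff_chain_within[rotated])
  moreover have "D \<circ> (\<lambda>t. t *\<^sub>R (y - x)) = (\<lambda>t. D (y - x) * t)"
    using linear_scale[OF has_derivative_linear[OF D]] by (auto simp: fun_eq_iff)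
  ultimately have "((g \<circ> p) has_field_derivative D (y - x)) (at 0 within {0..1})"
    by (simp add: has_field_derivative_def)
  then show ?thesis
    by (simp add: has_field_derivative_iff at_within_Icc_at_right p_def)
qed

lemma strongly_convex_on_first_order:
  fixes g :: "'a::real_normed_vector \<Rightarrow> real"
  assumes sc: "strongly_convex_on S \<mu> g" and x: "x \<in> S" and y: "y \<in> S"
    and D: "(g has_derivative D) (at x within S)"
  shows "D (y - x) + \<mu> / 2 * (norm (y - x))\<^sup>2 \<le> g y - g x"
proof -
  have "convex S" using sc by (simp add: strongly_convex_on_def)
  have "eventually (\<lambda>t. (g (x + t *\<^sub>R (y - x)) - g x) / t
          \<le> g y - g x - \<mu> / 2 * (1 - t) * (norm (y - x))\<^sup>2) (at_right 0)"
    unfolding eventually_at_right_field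
    using strongly_convex_on_segment(2)[OF sc x y] by (intro exI[of _ 1]) (auto simp: divide_le_eq mult.commute)
  moreover have "((\<lambda>t. g y - g x - \<mu> / 2 * (1 - t) * (norm (y - x))\<^sup>2)
      \<longlongrightarrow> g y - g x - \<mu> / 2 * (1 - 0) * (norm (y - x))\<^sup>2) (at_right 0)"
    by (intro tendsto_intros)
  ultimately have "D (y - x) \<le> g y - g x - \<mu> / 2 * (1 - 0) * (norm (y - x))\<^sup>2"
    using tendsto_le[OF trivial_limit_at_right_real _
        has_derivative_within_segment_quotient[OF \<open>convex S\<close> x y D]] by blast
  then show ?thesis by simp
qed

lemma strongly_convex_on_minimizer_growth:
  fixes g :: "'a::real_normed_vector \<Rightarrow> real"
  assumes sc: "strongly_convex_on S \<mu> g" and x: "x \<in> S" and y: "y \<in> S"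
    and min: "\<And>z. z \<in> S \<Longrightarrow> g x \<le> g z"
  shows "\<mu> / 2 * (norm (y - x))\<^sup>2 \<le> g y - g x"
proof -
  have "eventually (\<lambda>t. \<mu> / 2 * (1 - t) * (norm (y - x))\<^sup>2 \<le> g y - g x) (at_right 0)"
    unfolding eventually_at_right_field
  proof (intro exI[of _ 1] conjI allI impI)
    fix t :: real assume "0 < t" "t < 1"
    with strongly_convex_on_segment[OF sc x y, of t] min
    have "t * (\<mu> / 2 * (1 - t) * (norm (y - x))\<^sup>2) \<le> t * (g y - g x)"
      by (fastforce simp: algebra_simps)
    with \<open>0 < t\<close> show "\<mu> / 2 * (1 - t) * (norm (y - x))\<^sup>2 \<le> g y - g x" by simp
  qed simp
  moreover have "((\<lambda>t. \<mu> / 2 * (1 - t) * (norm (y - x))\<^sup>2)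
      \<longlongrightarrow> \<mu> / 2 * (1 - 0) * (norm (y - x))\<^sup>2) (at_right 0)"
    by (intro tendsto_intros)
  ultimately have "\<mu> / 2 * (1 - 0) * (norm (y - x))\<^sup>2 \<le> g y - g x"
    using tendsto_le[OF trivial_limit_at_right_real tendsto_const] by blast
  then show ?thesis by simp
qed

lemma strongly_convex_on_weighted_sum:
  fixes f :: "'i \<Rightarrow> 'a::real_normed_vector \<Rightarrow> real"
  assumes "convex S" and sc: "\<And>i. i \<in> I \<Longrightarrow> strongly_convex_on S \<mu> (f i)"
    and a: "\<And>i. i \<in> I \<Longrightarrow> 0 \<le> a i"
  shows "strongly_convex_on S (\<mu> * sum a I) (\<lambda>x. \<Sum>i\<in>I. a i * f i x)"
  unfolding strongly_convex_on_def
proof (intro conjI ballI \<open>convex S\<close>)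
  fix x y t assume x: "x \<in> S" and y: "y \<in> S" and t: "t \<in> {0..(1::real)}"
  define K where "K = \<mu> / 2 * t * (1 - t) * (norm (x - y))\<^sup>2"
  have "(\<Sum>i\<in>I. a i * f i (t *\<^sub>R x + (1 - t) *\<^sub>R y))
      \<le> (\<Sum>i\<in>I. t * (a i * f i x) + (1 - t) * (a i * f i y) - a i * K)"
  proof (rule sum_mono)
    fix i assume i: "i \<in> I"
    have "a i * f i (t *\<^sub>R x + (1 - t) *\<^sub>R y) \<le> a i * (t * f i x + (1 - t) * f i y - K)"
      using sc[OF i] x y t a[OF i] unfolding strongly_convex_on_def K_def
      by (intro mult_left_mono) auto
    then show "a i * f i (t *\<^sub>R x + (1 - t) *\<^sub>R y) \<le> t * (a i * f i x) + (1 - t) * (a i * f i y) - a i * K"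
      by (simp add: algebra_simps)
  qed
  also have "\<dots> = t * (\<Sum>i\<in>I. a i * f i x) + (1 - t) * (\<Sum>i\<in>I. a i * f i y) - sum a I * K"
    by (simp add: sum.distrib sum_subtractf sum_distrib_left sum_distrib_right)
  finally show "(\<Sum>i\<in>I. a i * f i (t *\<^sub>R x + (1 - t) *\<^sub>R y))
      \<le> t * (\<Sum>i\<in>I. a i * f i x) + (1 - t) * (\<Sum>i\<in>I. a i * f i y)
       - \<mu> * sum a I / 2 * t * (1 - t) * (norm (x - y))\<^sup>2"
    by (simp add: K_def algebra_simps)
qed

lemma linear_minus_quadratic_le:
  fixes e d c :: real
  assumes "0 < c"
  shows "e * d - c / 2 * d\<^sup>2 \<le> e\<^sup>2 / (2 * c)"
proof -
  have "0 \<le> (e - c * d)\<^sup>2" by simp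
  then have "2 * c * (e * d - c / 2 * d\<^sup>2) \<le> e\<^sup>2" by (simp add: power2_eq_square algebra_simps)
  with assms show ?thesis by (simp add: le_divide_eq mult.commute)
qed

lemma sum_inverse_squares_le: "(\<Sum>n=1..N. (1 / real n)\<^sup>2) \<le> 2 - 1 / real N"
proof (induction N)
  case (Suc N)
  show ?case
  proof (cases "N = 0")
    case False
    have "(1 / real (Suc N))\<^sup>2 \<le> 1 / (real N * real (Suc N))"
      using False by (simp add: power2_eq_square frac_le)
    also have "\<dots> = 1 / real N - 1 / real (Suc N)"
      using False by (simp add: field_simps)
    finally show ?thesis using Suc.IH by simp
  qed simp
qed simp

lemma harm_le_ln_plus_one: "1 \<le> N \<Longrightarrow> harm N \<le> ln (real N) + 1"
  using euler_mascheroni_sequence_decreasing[of 1 N] by (simp add: harm_def)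

lemma regret_le_sum_leader_gaps:
  fixes loss :: "nat \<Rightarrow> 'a \<Rightarrow> real"
  assumes x: "\<And>n. n \<in> {1..N} \<Longrightarrow> x n \<in> S" and z: "z \<in> S"
    and gap: "\<And>n y. n \<in> {1..N} \<Longrightarrow> y \<in> S \<Longrightarrow> (\<Sum>m=1..n. loss m (x n)) - (\<Sum>m=1..n. loss m y) \<le> \<delta> n"
  shows "(\<Sum>n=1..N. loss n (x n) - loss n z) \<le> sum \<delta> {1..N}"
proof -
  define q where "q n = (if n \<le> N then x n else z)" for n
  have telescope: "(\<Sum>n=1..K. (\<Sum>m=1..n. loss m (q n)) - (\<Sum>m=1..n. loss m (q (Suc n))))
      = (\<Sum>n=1..K. loss n (q n)) - (\<Sum>n=1..K. loss n (q (Suc K)))" for K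
    by (induction K) (simp_all add: algebra_simps)
  have "(\<Sum>n=1..N. loss n (x n) - loss n z)
      = (\<Sum>n=1..N. (\<Sum>m=1..n. loss m (q n)) - (\<Sum>m=1..n. loss m (q (Suc n))))"
    unfolding telescope by (simp add: q_def sum_subtractf)
  also have "\<dots> \<le> sum \<delta> {1..N}"
  proof (rule sum_mono)
    fix n assume n: "n \<in> {1..N}"
    have "q (Suc n) \<in> S" using x z by (simp add: q_def)
    with gap[OF n] n show "(\<Sum>m=1..n. loss m (q n)) - (\<Sum>m=1..n. loss m (q (Suc n))) \<le> \<delta> n"
      by (simp add: q_def)
  qed
  finally show ?thesis .
qed

lemma variational_inequality_leader_gap:
  fixes f :: "nat \<Rightarrow> 'a::real_normed_vector \<Rightarrow> real" and g :: "nat \<Rightarrow> 'a \<Rightarrow>\<^sub>L real"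
  assumes "0 < \<mu>" "1 \<le> n" and x: "x \<in> S" and z: "z \<in> S"
    and sc: "\<And>m. m \<in> {1..n} \<Longrightarrow> strongly_convex_on S \<mu> (f m)"
    and deriv: "\<And>m. m \<in> {1..n} \<Longrightarrow> (f m has_derivative blinfun_apply (g m)) (at x within S)"
    and VI: "0 \<le> blinfun_apply ((\<Sum>m=1..n-1. g m) + g') (z - x)"
  shows "(\<Sum>m=1..n. f m x) - (\<Sum>m=1..n. f m z) \<le> (norm (g n - g'))\<^sup>2 / (2 * (real n * \<mu>))"
proof -
  define d where "d = norm (z - x)"
  have "(\<Sum>m=1..n. g m (z - x) + \<mu> / 2 * d\<^sup>2) \<le> (\<Sum>m=1..n. f m z - f m x)"
    unfolding d_def by (intro sum_mono strongly_convex_on_first_order[OF sc x z deriv])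
  then have first_order: "(\<Sum>m=1..n. g m) (z - x) + real n * \<mu> / 2 * d\<^sup>2
      \<le> (\<Sum>m=1..n. f m z) - (\<Sum>m=1..n. f m x)"
    by (simp add: sum.distrib sum_subtractf blinfun.sum_left)
  have split: "(\<Sum>m=1..n. g m) = ((\<Sum>m=1..n-1. g m) + g') + (g n - g')"
    using \<open>1 \<le> n\<close> by (cases n) auto
  have "- (norm (g n - g') * d) \<le> (g n - g') (z - x)"
    using norm_blinfun[of "g n - g'" "z - x"] unfolding d_def by (simp add: abs_le_iff)
  with first_order VI have "(\<Sum>m=1..n. f m x) - (\<Sum>m=1..n. f m z)
      \<le> norm (g n - g') * d - real n * \<mu> / 2 * d\<^sup>2"
    unfolding split by (simp add: plus_blinfun.rep_eq blinfun.diff_left)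
  also have "\<dots> \<le> (norm (g n - g'))\<^sup>2 / (2 * (real n * \<mu>))"
    using linear_minus_quadratic_le[of "real n * \<mu>"] \<open>0 < \<mu>\<close> \<open>1 \<le> n\<close> by simp
  finally show ?thesis .
qed

lemma follow_the_leader_gap:
  fixes h :: "nat \<Rightarrow> 'a::real_normed_vector \<Rightarrow> real"
  assumes "0 < \<mu>" "1 \<le> n" and x: "x \<in> S" and y: "y \<in> S"
    and a: "\<And>m. m \<in> {1..n} \<Longrightarrow> 0 \<le> a m" and "0 < a n"
    and sc: "\<And>m. m \<in> {1..n} \<Longrightarrow> strongly_convex_on S \<mu> (h m)"
    and leader: "\<And>z. z \<in> S \<Longrightarrow> (\<Sum>m=1..n-1. a m * h m x) \<le> (\<Sum>m=1..n-1. a m * h m z)"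
    and deriv: "(h n has_derivative blinfun_apply D) (at x within S)"
  shows "(\<Sum>m=1..n. a m * h m x) - (\<Sum>m=1..n. a m * h m y)
           \<le> (a n * norm D)\<^sup>2 / (2 * (\<mu> * sum a {1..n}))"
proof -
  define d where "d = norm (y - x)"
  have n: "n \<in> {1..n}" using \<open>1 \<le> n\<close> by simp
  have "convex S" using sc[OF n] by (simp add: strongly_convex_on_def)
  have "strongly_convex_on S (\<mu> * sum a {1..n-1}) (\<lambda>z. \<Sum>m=1..n-1. a m * h m z)"
    using \<open>convex S\<close> by (rule strongly_convex_on_weighted_sum) (auto intro: sc a)
  from strongly_convex_on_minimizer_growth[OF this x y leader]
  have previous: "\<mu> * sum a {1..n-1} / 2 * d\<^sup>2
      \<le> (\<Sum>m=1..n-1. a m * h m y) - (\<Sum>m=1..n-1. a m * h m x)"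
    by (simp add: d_def)
  have "D (y - x) + \<mu> / 2 * d\<^sup>2 \<le> h n y - h n x"
    unfolding d_def by (rule strongly_convex_on_first_order[OF sc[OF n] x y deriv])
  moreover have "- (norm D * d) \<le> D (y - x)"
    using norm_blinfun[of D "y - x"] unfolding d_def by (simp add: abs_le_iff)
  ultimately have newest: "a n * (\<mu> / 2 * d\<^sup>2 - norm D * d) \<le> a n * (h n y - h n x)"
    using \<open>0 < a n\<close> by (intro mult_left_mono) auto
  have sums: "sum f {1..n} = sum f {1..n-1} + f n" for f :: "nat \<Rightarrow> real"
    using \<open>1 \<le> n\<close> by (cases n) auto
  have "(\<Sum>m=1..n. a m * h m x) - (\<Sum>m=1..n. a m * h m y)
      = ((\<Sum>m=1..n-1. a m * h m x) - (\<Sum>m=1..n-1. a m * h m y)) + a n * (h n x - h n y)"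
    unfolding sums[of "\<lambda>m. a m * h m x"] sums[of "\<lambda>m. a m * h m y"] by (simp add: algebra_simps)
  also have "\<dots> \<le> - (\<mu> * sum a {1..n-1} / 2 * d\<^sup>2) + a n * (norm D * d - \<mu> / 2 * d\<^sup>2)"
    using previous newest by (simp add: algebra_simps)
  also have "\<dots> = (a n * norm D) * d - \<mu> * sum a {1..n} / 2 * d\<^sup>2"
    unfolding sums[of a] by (simp add: algebra_simps)
  also have "\<dots> \<le> (a n * norm D)\<^sup>2 / (2 * (\<mu> * sum a {1..n}))"
    using \<open>0 < \<mu>\<close> sum_pos2[of "{1..n}" n a] n \<open>0 < a n\<close> a by (intro linear_minus_quadratic_le) simp
  finally show ?thesis .
qed

lemma mobil_w_zero_exponent: "1 \<le> n \<Longrightarrow> mobil_w 0 n = 1"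
  by (simp add: mobil_w_def)

(* Compactness of Pol, Lipschitz continuity of the model gradients and the bound G_f only serve
   to make the variational inequalities solvable; the iterates are given, so they are omitted. *)
locale mobil_vi_unweighted =
  fixes Pol :: "'a::real_normed_vector set"
    and Models :: "'b::real_normed_vector set"
    and F :: "'a \<Rightarrow> 'a \<Rightarrow> real"
    and gradF :: "'a \<Rightarrow> 'a \<Rightarrow> ('a \<Rightarrow>\<^sub>L real)"
    and gradM :: "'b \<Rightarrow> 'a \<Rightarrow> 'a \<Rightarrow> ('a \<Rightarrow>\<^sub>L real)"
    and hc :: "'a \<Rightarrow> 'b \<Rightarrow> real"
    and hgrad :: "'a \<Rightarrow> 'b \<Rightarrow> ('b \<Rightarrow>\<^sub>L real)"
    and \<mu>f \<mu>h Gh eps :: real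
    and N :: nat
    and pis :: "nat \<Rightarrow> 'a"
    and Fhs :: "nat \<Rightarrow> 'b"
  assumes F_deriv: "\<And>q' x. q' \<in> Pol \<Longrightarrow> x \<in> Pol \<Longrightarrow>
                    (F q' has_derivative blinfun_apply (gradF q' x)) (at x within Pol)"
    and h_deriv: "\<And>n Fh. n \<in> {1..N} \<Longrightarrow> Fh \<in> Models \<Longrightarrow>
                    (hc (pis n) has_derivative blinfun_apply (hgrad (pis n) Fh)) (at Fh within Models)"
    and h_bound: "\<And>n Fh. n \<in> {1..N} \<Longrightarrow> Fh \<in> Models \<Longrightarrow>
                    hc (pis n) Fh \<ge> (norm (gradF (pis n) (pis n) - gradM Fh (pis n) (pis n)))\<^sup>2"
    and \<mu>f_pos: "\<mu>f > 0" and \<mu>h_pos: "\<mu>h > 0"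
    and f_sc: "\<And>n. n \<in> {1..N} \<Longrightarrow> strongly_convex_on Pol \<mu>f (F (pis n))"
    and h_sc: "\<And>n. n \<in> {1..N} \<Longrightarrow> strongly_convex_on Models \<mu>h (hc (pis n))"
    and h_grad_bound: "\<And>n Fh. n \<in> {1..N} \<Longrightarrow> Fh \<in> Models \<Longrightarrow> norm (hgrad (pis n) Fh) \<le> Gh"
    and eps_bound: "\<And>K (\<theta> :: nat \<Rightarrow> real) (qs :: nat \<Rightarrow> 'a).
                    (\<forall>n\<in>{1..K}. \<theta> n > 0) \<Longrightarrow> (\<Sum>n = 1..K. \<theta> n) = 1 \<Longrightarrow>
                    (\<forall>n\<in>{1..K}. qs n \<in> Pol) \<Longrightarrow>
                    \<exists>Fh\<in>Models. (\<Sum>n = 1..K. \<theta> n * hc (qs n) Fh) \<le> eps"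
    and N_pos: "N \<ge> 1"
    and mobil_vi: "MoBIL_VI 0 Pol Models gradF gradM hc N pis Fhs"
begin

lemma iterate_in_Pol: "n \<in> {1..N} \<Longrightarrow> pis n \<in> Pol"
  using mobil_vi unfolding MoBIL_VI_def by (cases n) auto

lemma model_in_Models:
  assumes "n \<in> {1..N}"
  shows "Fhs n \<in> Models"
proof (cases "n = 1")
  case False
  with assms obtain k where "n = Suc k" "k \<in> {1..<N}" by (cases n) auto
  with mobil_vi show ?thesis unfolding MoBIL_VI_def by auto
qed (use mobil_vi in \<open>simp add: MoBIL_VI_def\<close>)

lemma iterate_solves_VI:
  assumes "n \<in> {1..N}" "z \<in> Pol"
  shows "0 \<le> ((\<Sum>m=1..n-1. gradF (pis m) (pis n)) + gradM (Fhs n) (pis n) (pis n)) (z - pis n)"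
proof -
  obtain k where k: "n = Suc k" "k \<in> {0..<N}" using assms(1) by (cases n) auto
  have "(\<Sum>m=1..k. mobil_w 0 m *\<^sub>R gradF (pis m) (pis n)) = (\<Sum>m=1..k. gradF (pis m) (pis n))"
    by (intro sum.cong) (auto simp: mobil_w_zero_exponent)
  with mobil_vi k assms(2) show ?thesis
    unfolding MoBIL_VI_def Phi_def by (auto simp: mobil_w_zero_exponent)
qed

lemma model_is_leader:
  assumes "n \<in> {1..N}" "G \<in> Models"
  shows "(\<Sum>m=1..n-1. 1 / real m * hc (pis m) (Fhs n)) \<le> (\<Sum>m=1..n-1. 1 / real m * hc (pis m) G)"
proof (cases "n = 1")
  case False
  then obtain k where k: "n = Suc k" "k \<in> {1..<N}" using assms(1) by (cases n) auto
  have unit_weights: "(\<Sum>m=1..k. mobil_w 0 m / real m * hc (pis m) H)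
      = (\<Sum>m=1..k. 1 / real m * hc (pis m) H)" for H
    by (intro sum.cong) (auto simp: mobil_w_zero_exponent)
  from mobil_vi k assms(2)
  have "(\<Sum>m=1..k. mobil_w 0 m / real m * hc (pis m) (Fhs (k + 1)))
      \<le> (\<Sum>m=1..k. mobil_w 0 m / real m * hc (pis m) G)"
    unfolding MoBIL_VI_def by blast
  then show ?thesis unfolding unit_weights using k by simp
qed simp

lemma policy_leader_gap:
  assumes n: "n \<in> {1..N}" and z: "z \<in> Pol"
  shows "(\<Sum>m=1..n. F (pis m) (pis n)) - (\<Sum>m=1..n. F (pis m) z)
           \<le> 1 / real n * hc (pis n) (Fhs n) / (2 * \<mu>f)"
proof -
  have "(\<Sum>m=1..n. F (pis m) (pis n)) - (\<Sum>m=1..n. F (pis m) z)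
      \<le> (norm (gradF (pis n) (pis n) - gradM (Fhs n) (pis n) (pis n)))\<^sup>2 / (2 * (real n * \<mu>f))"
    using n by (intro variational_inequality_leader_gap[OF \<mu>f_pos _ iterate_in_Pol[OF n] z]
        f_sc F_deriv iterate_in_Pol iterate_solves_VI[OF n z]) auto
  also have "\<dots> \<le> hc (pis n) (Fhs n) / (2 * (real n * \<mu>f))"
    using n \<mu>f_pos by (intro divide_right_mono h_bound model_in_Models) auto
  finally show ?thesis by simp
qed

lemma model_leader_gap:
  assumes n: "n \<in> {1..N}" and G: "G \<in> Models"
  shows "(\<Sum>m=1..n. 1 / real m * hc (pis m) (Fhs n)) - (\<Sum>m=1..n. 1 / real m * hc (pis m) G)
           \<le> (1 / real n)\<^sup>2 * Gh\<^sup>2 / (2 * \<mu>h)"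
proof -
  let ?D = "hgrad (pis n) (Fhs n)"
  have "(\<Sum>m=1..n. 1 / real m * hc (pis m) (Fhs n)) - (\<Sum>m=1..n. 1 / real m * hc (pis m) G)
      \<le> (1 / real n * norm ?D)\<^sup>2 / (2 * (\<mu>h * (\<Sum>m=1..n. 1 / real m)))"
    using n by (intro follow_the_leader_gap[OF \<mu>h_pos _ model_in_Models[OF n] G]
        h_sc model_is_leader h_deriv model_in_Models) auto
  also have "\<dots> \<le> (1 / real n * Gh)\<^sup>2 / (2 * (\<mu>h * 1))"
  proof (intro frac_le power_mono mult_left_mono)
    show "1 \<le> (\<Sum>m=1..n. 1 / real m)"
      using n member_le_sum[of 1 "{1..n}" "\<lambda>m. 1 / real m"] by simp
    show "norm ?D \<le> Gh" using n by (intro h_grad_bound model_in_Models)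
  qed (use \<mu>h_pos in auto)
  finally show ?thesis by (simp add: power_divide)
qed

lemma eps_nonneg: "0 \<le> eps"
proof -
  obtain G where G: "G \<in> Models" "hc (pis 1) G \<le> eps"
    using eps_bound[of 1 "\<lambda>_. 1" pis] iterate_in_Pol N_pos by auto
  have "0 \<le> hc (pis 1) G"
    using N_pos G(1) by (intro order.trans[OF zero_le_power2 h_bound]) auto
  with G(2) show ?thesis by simp
qed

lemma model_regret:
  "(\<Sum>n=1..N. 1 / real n * hc (pis n) (Fhs n)) \<le> Gh\<^sup>2 / \<mu>h + (ln (real N) + 1) * eps"
proof -
  have harm_eq: "harm N = (\<Sum>n=1..N. 1 / real n)" by (simp add: harm_def inverse_eq_divide)
  have "0 < (harm N :: real)" using N_pos by simp
  then have "harm N \<noteq> (0 :: real)" by linarith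
  define \<theta> where "\<theta> n = 1 / real n / harm N" for n
  have "(\<Sum>n=1..N. \<theta> n) = 1"
    unfolding \<theta>_def sum_divide_distrib[symmetric] harm_eq[symmetric]
    using \<open>harm N \<noteq> 0\<close> by simp
  moreover have "\<forall>n\<in>{1..N}. 0 < \<theta> n" using \<open>0 < harm N\<close> by (simp add: \<theta>_def)
  ultimately obtain G where G: "G \<in> Models" and G_eps: "(\<Sum>n=1..N. \<theta> n * hc (pis n) G) \<le> eps"
    using eps_bound[of N \<theta> pis] iterate_in_Pol by blast
  have "(\<Sum>n=1..N. 1 / real n * hc (pis n) (Fhs n) - 1 / real n * hc (pis n) G)
      \<le> (\<Sum>n=1..N. (1 / real n)\<^sup>2 * Gh\<^sup>2 / (2 * \<mu>h))"
    by (rule regret_le_sum_leader_gaps[OF model_in_Models G model_leader_gap])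
  also have "\<dots> = (\<Sum>n=1..N. (1 / real n)\<^sup>2) * (Gh\<^sup>2 / (2 * \<mu>h))"
    by (simp add: sum_distrib_right sum_divide_distrib)
  also have "\<dots> \<le> 2 * (Gh\<^sup>2 / (2 * \<mu>h))"
    using sum_inverse_squares_le[of N] \<mu>h_pos
    by (intro mult_right_mono) (auto intro: order_trans[of _ "2 - 1 / real N"])
  finally have "(\<Sum>n=1..N. 1 / real n * hc (pis n) (Fhs n))
      \<le> (\<Sum>n=1..N. 1 / real n * hc (pis n) G) + Gh\<^sup>2 / \<mu>h"
    by (simp add: sum_subtractf)
  also have "(\<Sum>n=1..N. 1 / real n * hc (pis n) G) = harm N * (\<Sum>n=1..N. \<theta> n * hc (pis n) G)"
    using \<open>harm N \<noteq> 0\<close> by (simp add: \<theta>_def sum_distrib_left)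
  also have "\<dots> \<le> harm N * eps"
    using G_eps harm_nonneg by (rule mult_left_mono)
  also have "\<dots> \<le> (ln (real N) + 1) * eps"
    using harm_le_ln_plus_one[OF N_pos] eps_nonneg by (rule mult_right_mono)
  finally show ?thesis by simp
qed

lemma policy_regret:
  assumes "y \<in> Pol"
  shows "(\<Sum>n=1..N. F (pis n) (pis n) - F (pis n) y) \<le> (Gh\<^sup>2 / \<mu>h + (ln (real N) + 1) * eps) / (2 * \<mu>f)"
proof -
  have "(\<Sum>n=1..N. F (pis n) (pis n) - F (pis n) y)
      \<le> (\<Sum>n=1..N. 1 / real n * hc (pis n) (Fhs n) / (2 * \<mu>f))"
    by (rule regret_le_sum_leader_gaps[OF iterate_in_Pol assms policy_leader_gap])
  also have "\<dots> \<le> (Gh\<^sup>2 / \<mu>h + (ln (real N) + 1) * eps) / (2 * \<mu>f)"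
    unfolding sum_divide_distrib[symmetric] using model_regret \<mu>f_pos by (simp add: divide_right_mono)
  finally show ?thesis .
qed

lemma regret_bound: "regret_w 0 Pol F N pis \<le> (Gh\<^sup>2 / \<mu>h + (ln (real N) + 1) * eps) / (2 * \<mu>f)"
proof -
  have "regret_w 0 Pol F N pis = (SUP y\<in>Pol. \<Sum>n=1..N. F (pis n) (pis n) - F (pis n) y)"
    unfolding regret_w_def by (intro SUP_cong refl sum.cong) (auto simp: mobil_w_zero_exponent)
  also have "\<dots> \<le> (Gh\<^sup>2 / \<mu>h + (ln (real N) + 1) * eps) / (2 * \<mu>f)"
    using iterate_in_Pol[of 1] N_pos by (intro cSUP_least policy_regret) auto
  finally show ?thesis .
qed

end

theorem proposition1:
  fixes Pol :: "'a::real_normed_vector set"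
    and Models :: "'b::real_normed_vector set"
    and F :: "'a \<Rightarrow> 'a \<Rightarrow> real"
    and gradF :: "'a \<Rightarrow> 'a \<Rightarrow> ('a \<Rightarrow>\<^sub>L real)"
    and Fev :: "'b \<Rightarrow> 'a \<Rightarrow> 'a \<Rightarrow> real"
    and gradM :: "'b \<Rightarrow> 'a \<Rightarrow> 'a \<Rightarrow> ('a \<Rightarrow>\<^sub>L real)"
    and hc :: "'a \<Rightarrow> 'b \<Rightarrow> real"
    and hgrad :: "'a \<Rightarrow> 'b \<Rightarrow> ('b \<Rightarrow>\<^sub>L real)"
    and L \<mu>f \<mu>h Gf Gh eps :: real
    and N :: nat
    and pis :: "nat \<Rightarrow> 'a"
    and Fhs :: "nat \<Rightarrow> 'b"
  assumes Pol_compact: "compact Pol" and Pol_convex: "convex Pol"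
    and Models_convex: "convex Models"
    and F_deriv: "\<And>q' x. q' \<in> Pol \<Longrightarrow> x \<in> Pol \<Longrightarrow>
                    (F q' has_derivative blinfun_apply (gradF q' x)) (at x within Pol)"
    and M_deriv: "\<And>Fh q' x. Fh \<in> Models \<Longrightarrow> q' \<in> Pol \<Longrightarrow> x \<in> Pol \<Longrightarrow>
                    (Fev Fh q' has_derivative blinfun_apply (gradM Fh q' x)) (at x within Pol)"
    and L_nonneg: "L \<ge> 0"
    and M_lip: "\<And>Fh x q'. Fh \<in> Models \<Longrightarrow> x \<in> Pol \<Longrightarrow> q' \<in> Pol \<Longrightarrow>
                    norm (gradM Fh x x - gradM Fh q' q') \<le> L * norm (x - q')"
    and h_deriv: "\<And>n Fh. n \<in> {1..N} \<Longrightarrow> Fh \<in> Models \<Longrightarrow>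
                    (hc (pis n) has_derivative blinfun_apply (hgrad (pis n) Fh)) (at Fh within Models)"
    and h_bound: "\<And>n Fh. n \<in> {1..N} \<Longrightarrow> Fh \<in> Models \<Longrightarrow>
                    hc (pis n) Fh \<ge> (norm (gradF (pis n) (pis n) - gradM Fh (pis n) (pis n)))\<^sup>2"
    and \<mu>f_pos: "\<mu>f > 0" and \<mu>h_pos: "\<mu>h > 0"
    and f_sc: "\<And>n. n \<in> {1..N} \<Longrightarrow> strongly_convex_on Pol \<mu>f (F (pis n))"
    and f_grad_bd: "\<And>n x. n \<in> {1..N} \<Longrightarrow> x \<in> Pol \<Longrightarrow> norm (gradF (pis n) x) \<le> Gf"
    and h_sc: "\<And>n. n \<in> {1..N} \<Longrightarrow> strongly_convex_on Models \<mu>h (hc (pis n))"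
    and h_grad_bd: "\<And>n Fh. n \<in> {1..N} \<Longrightarrow> Fh \<in> Models \<Longrightarrow> norm (hgrad (pis n) Fh) \<le> Gh"
    and eps_def: "\<And>K (\<theta> :: nat \<Rightarrow> real) (qs :: nat \<Rightarrow> 'a).
                    (\<forall>n\<in>{1..K}. \<theta> n > 0) \<Longrightarrow> (\<Sum>n = 1..K. \<theta> n) = 1 \<Longrightarrow>
                    (\<forall>n\<in>{1..K}. qs n \<in> Pol) \<Longrightarrow>
                    \<exists>Fh\<in>Models. (\<Sum>n = 1..K. \<theta> n * hc (qs n) Fh) \<le> eps"
    and N_pos: "N \<ge> 1"
    and alg: "MoBIL_VI 0 Pol Models gradF gradM hc N pis Fhs"
  shows "avg_regret 0 Pol F N pis
           \<le> Gh\<^sup>2 / (2 * \<mu>f * \<mu>h) * (1 / real N) + eps / (2 * \<mu>f) * ((ln (real N) + 1) / real N)"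
proof -
  interpret mobil_vi_unweighted Pol Models F gradF gradM hc hgrad \<mu>f \<mu>h Gh eps N pis Fhs
    by unfold_locales (fact assms)+
  have unit_weights: "(\<Sum>n=1..N. mobil_w 0 n) = real N"
    by (simp add: mobil_w_zero_exponent)
  have "avg_regret 0 Pol F N pis \<le> (Gh\<^sup>2 / \<mu>h + (ln (real N) + 1) * eps) / (2 * \<mu>f) / real N"
    unfolding avg_regret_def unit_weights using regret_bound by (rule divide_right_mono) simp
  also have "\<dots> = Gh\<^sup>2 / (2 * \<mu>f * \<mu>h) * (1 / real N) + eps / (2 * \<mu>f) * ((ln (real N) + 1) / real N)"
    using \<mu>f_pos \<mu>h_pos N_pos by (simp add: field_simps)
  finally show ?thesis .
qed

end
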